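(* For $\tau\in\mathbb{R}$, $$\mu_0(\tau;0):=\int_{-\infty}^{\infty}\exp(-x^6+\tau x^4)\,dx$$ is given by $$\mu_0(\tau;0)=\tfrac13\Gamma\!\left(\tfrac16\right){}_2F_2\!\left(\tfrac1{12},\tfrac7{12};\tfrac13,\tfrac23;\tfrac{4\tau^3}{27}\right)+\tfrac13\tau\Gamma\!\left(\tfrac56\right){}_2F_2\!\left(\tfrac5{12},\tfrac{11}{12};\tfrac23,\tfrac43;\tfrac{4\tau^3}{27}\right)+\frac{\tau^2\sqrt{\pi}}{12}{}_2F_2\!\left(\tfrac34,\tfrac54;\tfrac43,\tfrac53;\tfrac{4\tau^3}{27}\right).$$
   Context: ${}_2F_2(a_1,a_2;b_1,b_2;z)$ denotes the generalised hypergeometric function with upper parameters $a_1,a_2$ and lower parameters $b_1,b_2$. *)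

theory Defs
  imports "HOL-Analysis.Analysis"
begin

definition hyp2F2 :: "real \<Rightarrow> real \<Rightarrow> real \<Rightarrow> real \<Rightarrow> real \<Rightarrow> real" where
  "hyp2F2 a1 a2 b1 b2 z =
     (\<Sum>n. (pochhammer a1 n * pochhammer a2 n) / (pochhammer b1 n * pochhammer b2 n)
            * z ^ n / fact n)"

end

theory Submission
  imports Defs
begin

(* Expanding exp (t x^4) into its power series and integrating termwise, which is justified
   because exp (-x^6 + |t| x^4) is integrable, gives
     integral = sum_i t^i / i! * Gamma ((4i + 1) / 6) / 3,
   the moments of exp (-x^6) coming from the substitution u = x^6.  Grouping the indices
   i = 3n + r by their residue r mod 3, the duplication formula
     Gamma (z + 2n) = Gamma z * 4^n * (z/2)_n * ((z+1)/2)_n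
   and the triplication (3n + r)! = r! * 27^n * ((r+1)/3)_n * ((r+2)/3)_n * ((r+3)/3)_n
   turn the r-th subseries into a 2F2 series in 4 t^3 / 27: for each r one of the lower
   parameters (r+j)/3 equals 1 and supplies the n! of that series. *)

lemma summable_comp_inj:
  fixes a :: "nat \<Rightarrow> 'a::banach"
  assumes "summable (\<lambda>i. norm (a i))" "inj h"
  shows "summable (\<lambda>n. a (h n))"
proof (rule summable_norm_cancel, rule bounded_imp_summable)
  fix N
  have "(\<Sum>n\<le>N. norm (a (h n))) = (\<Sum>i\<in>h ` {..N}. norm (a i))"
    using assms(2) by (simp add: sum.reindex inj_on_subset)
  also have "\<dots> \<le> (\<Sum>i. norm (a i))"
    by (rule sum_le_suminf[OF assms(1)]) auto
  finally show "(\<Sum>n\<le>N. norm (a (h n))) \<le> (\<Sum>i. norm (a i))" .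
qed simp

lemma suminf_split_residues:
  fixes a :: "nat \<Rightarrow> 'a::banach"
  assumes "summable (\<lambda>i. norm (a i))" "0 < m"
  shows "suminf a = (\<Sum>r<m. \<Sum>n. a (m * n + r))"
proof -
  have "inj (\<lambda>n. m * n + r)" for r
    using assms(2) by (auto intro!: inj_onI)
  then have summable_residue: "summable (\<lambda>n. a (m * n + r))" for r
    by (rule summable_comp_inj[OF assms(1)])
  have "sum a {n * m..<n * m + m} = (\<Sum>r<m. a (m * n + r))" for n
    using sum.shift_bounds_nat_ivl[of a 0 "n * m" m]
    by (simp add: atLeast0LessThan add.commute mult.commute)
  then have "(\<lambda>n. \<Sum>r<m. a (m * n + r)) sums suminf a"
    using sums_group[OF summable_sums[OF summable_norm_cancel[OF assms(1)]] assms(2)] by simp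
  then have "suminf a = (\<Sum>n. \<Sum>r<m. a (m * n + r))"
    by (simp add: sums_iff)
  also have "\<dots> = (\<Sum>r<m. \<Sum>n. a (m * n + r))"
    using summable_residue by (rule suminf_sum)
  finally show ?thesis .
qed

lemma suminf_mult_of_summable:
  fixes f :: "nat \<Rightarrow> 'a::real_normed_field"
  assumes "summable (\<lambda>n. c * f n)"
  shows "(\<Sum>n. c * f n) = c * suminf f"
  using assms by (cases "c = 0") (simp_all add: suminf_mult)

lemma pochhammer_triple:
  fixes z :: "'a::field_char_0"
  shows "pochhammer z (3 * n) =
    27 ^ n * pochhammer (z / 3) n * pochhammer ((z + 1) / 3) n * pochhammer ((z + 2) / 3) n"
proof (induction n)
  case (Suc n)
  have "pochhammer z (3 * Suc n) =
      pochhammer z (3 * n) * ((z + 3 * of_nat n) * (z + 3 * of_nat n + 1) * (z + 3 * of_nat n + 2))"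
    by (simp add: pochhammer_Suc numeral_3_eq_3 algebra_simps)
  also have "\<dots> = 27 ^ Suc n * pochhammer (z / 3) (Suc n) * pochhammer ((z + 1) / 3) (Suc n) *
      pochhammer ((z + 2) / 3) (Suc n)"
    unfolding Suc.IH by (simp add: pochhammer_Suc field_simps)
  finally show ?case .
qed simp

lemma fact_add_triple:
  "(fact (3 * n + r) :: 'a::field_char_0) =
     fact r * 27 ^ n * pochhammer ((of_nat r + 1) / 3) n * pochhammer ((of_nat r + 2) / 3) n *
       pochhammer ((of_nat r + 3) / 3) n"
proof -
  have "(fact (r + 3 * n) :: 'a) = fact r * pochhammer (of_nat r + 1) (3 * n)"
    by (simp add: pochhammer_fact pochhammer_product' add.commute)
  then show ?thesis
    by (simp add: pochhammer_triple add.commute add.left_commute mult.assoc)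
qed

lemma Gamma_add_even:
  fixes z :: real
  assumes "z \<notin> \<int>\<^sub>\<le>\<^sub>0"
  shows "Gamma (z + 2 * n) = Gamma z * 4 ^ n * pochhammer (z / 2) n * pochhammer ((z + 1) / 2) n"
proof -
  have "Gamma (z + 2 * n) = Gamma z * pochhammer z (2 * n)"
    using pochhammer_Gamma[OF assms, of "2 * n"] assms by (simp add: Gamma_eq_zero_iff)
  also have "pochhammer z (2 * n) = 4 ^ n * pochhammer (z / 2) n * pochhammer ((z + 1) / 2) n"
    using pochhammer_double[of "z / 2" n] by (simp add: power_mult add_divide_distrib)
  finally show ?thesis by simp
qed

lemma Gamma_three_halves: "Gamma (3 / 2 :: real) = sqrt pi / 2"
proof -
  have "(1 / 2 :: real) \<notin> \<int>\<^sub>\<le>\<^sub>0"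
    by auto
  then show ?thesis
    using Gamma_plus1[of "1/2 :: real"] by (simp add: Gamma_one_half_real)
qed

lemma hyp2F2_eq_suminf_pochhammer:
  "hyp2F2 a1 a2 b1 b2 z =
     (\<Sum>n. pochhammer a1 n * pochhammer a2 n / (pochhammer b1 n * pochhammer b2 n * pochhammer 1 n) *
        z ^ n)"
  by (simp add: hyp2F2_def pochhammer_fact)

lemma has_integral_power_mult_exp_neg_power_Ioi:
  fixes k n :: nat
  assumes "0 < n"
  shows "((\<lambda>x::real. x ^ k * exp (- (x ^ n))) has_integral Gamma ((k + 1) / n) / n) {0<..}"
proof -
  define c where "c = (k + 1) / n - (1::real)"
  define f where "f u = u powr c / exp u / n" for u :: real
  have "(f has_integral Gamma (c + 1) / n) {0..}"
    unfolding f_def using Gamma_integral_real[of "c + 1"] assms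
    by (intro has_integral_divide) (simp_all add: c_def)
  then have f: "(f has_integral Gamma (c + 1) / n) {0<..}"
    by (rule has_integral_spike_set_eq[THEN iffD1, rotated 2]) (auto intro: negligible_subset[of "{0}"])
  have der: "((\<lambda>x. x ^ n) has_real_derivative n * x ^ (n - 1)) (at x within {0<..})" for x :: real
    by (auto intro!: derivative_eq_intros)
  have inj: "inj_on (\<lambda>x::real. x ^ n) {0<..}"
    using assms by (auto intro!: inj_onI simp: power_eq_iff_eq_base)
  have img: "(\<lambda>x::real. x ^ n) ` {0<..} = {0<..}"
    using assms by (auto intro!: image_eqI[of _ _ "root n u" for u] simp: real_root_pow_pos)
  have "f absolutely_integrable_on {0<..}"
    using f by (intro nonnegative_absolutely_integrable_1) (auto simp: f_def)
  then have "(\<lambda>x. \<bar>n * x ^ (n - 1)\<bar> * f (x ^ n)) absolutely_integrable_on {0<..} \<and>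
        integral {0<..} (\<lambda>x. \<bar>n * x ^ (n - 1)\<bar> * f (x ^ n)) = Gamma (c + 1) / n"
    using has_absolute_integral_change_of_variables_1'[OF _ der inj] f img
    by (simp add: integral_unique)
  then have transformed: "((\<lambda>x. \<bar>n * x ^ (n - 1)\<bar> * f (x ^ n)) has_integral Gamma (c + 1) / n) {0<..}"
    using absolutely_integrable_on_def has_integral_integrable_integral by blast
  have pointwise: "\<bar>n * x ^ (n - 1)\<bar> * f (x ^ n) = x ^ k * exp (- (x ^ n))" if "x \<in> {0<..}" for x :: real
  proof -
    have "x ^ (n - 1) * (x ^ n) powr c = x powr (real n - 1) * x powr (1 + real k - real n)"
      using that assms by (simp add: powr_realpow [symmetric] powr_powr c_def right_diff_distrib)
    also have "\<dots> = x ^ k"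
      using that by (simp add: powr_add [symmetric] powr_realpow)
    finally have "x ^ (n - 1) * (x ^ n) powr c = x ^ k" .
    then show ?thesis
      using that assms by (simp add: f_def exp_minus field_simps)
  qed
  show ?thesis
    using has_integral_eq[OF pointwise transformed] by (simp add: c_def)
qed

lemma has_bochner_integral_power_mult_exp_neg_power:
  fixes k n :: nat
  assumes "even k" "even n" "0 < n"
  shows "has_bochner_integral lborel (\<lambda>x::real. x ^ k * exp (- (x ^ n))) (2 * Gamma ((k + 1) / n) / n)"
proof -
  let ?h = "\<lambda>x::real. x ^ k * exp (- (x ^ n))"
  let ?I = "Gamma ((k + 1) / n) / n"
  have nonneg: "0 \<le> ?h x" for x
    using assms by (simp add: zero_le_even_power)
  have pos: "(?h has_integral ?I) {0<..}"
    by (rule has_integral_power_mult_exp_neg_power_Ioi[OF assms(3)])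
  moreover have "?h absolutely_integrable_on {0<..}"
    using pos nonneg by (intro nonnegative_absolutely_integrable_1) auto
  ultimately have "(\<lambda>x. ?h (- x)) absolutely_integrable_on {..<0} \<and> integral {..<0} (\<lambda>x. ?h (- x)) = ?I"
    by (subst has_absolute_integral_reflect_real) (auto simp: integral_unique)
  then have neg: "(?h has_integral ?I) {..<0}"
    using assms by (simp add: absolutely_integrable_on_def has_integral_integrable_integral)
  have "negligible ({..<0} \<inter> {0::real<..})"
    by (auto intro: negligible_subset[of "{}"])
  then have "(?h has_integral 2 * ?I) ({..<0} \<union> {0<..})"
    using has_integral_Un[OF neg pos] by simp
  then have "(?h has_integral 2 * ?I) UNIV"
    by (rule has_integral_spike_set_eq[THEN iffD1, rotated 2]) (auto intro: negligible_subset[of "{0}"])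
  then have "integral\<^sup>N lborel (\<lambda>x. ennreal (?h x)) = ennreal (2 * ?I)"
    using nn_integral_has_integral_lebesgue'[of UNIV ?h] nonneg by simp
  then show ?thesis
    using nonneg assms by (intro has_bochner_integral_nn_integral) (auto simp: less_imp_le)
qed

lemma
  fixes M :: "'a measure" and g w :: "'a \<Rightarrow> real" and t :: real
  assumes nonneg: "\<And>x. 0 \<le> w x"
    and moments: "\<And>i. integrable M (\<lambda>x. g x ^ i * w x)"
    and dominated: "integrable M (\<lambda>x. exp (\<bar>t\<bar> * \<bar>g x\<bar>) * w x)"
  shows sums_integral_exp_mult_moments:
      "(\<lambda>i. t ^ i / fact i * (\<integral>x. g x ^ i * w x \<partial>M)) sums (\<integral>x. exp (t * g x) * w x \<partial>M)"
    and summable_abs_integral_moments: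
      "summable (\<lambda>i. \<bar>t ^ i / fact i * (\<integral>x. g x ^ i * w x \<partial>M)\<bar>)"
proof -
  have exp_sums: "(\<lambda>i. y ^ i / fact i * w x) sums (exp y * w x)" for y x
  proof -
    have "(\<lambda>i. y ^ i / fact i) sums exp y"
      using exp_converges[of y] by (simp add: divide_inverse mult.commute)
    then show ?thesis by (rule sums_mult2)
  qed
  define f where "f = (\<lambda>i x. t ^ i / fact i * (g x ^ i * w x))"
  have f_int: "integrable M (f i)" for i
    unfolding f_def using moments by simp
  have integral_f: "integral\<^sup>L M (f i) = t ^ i / fact i * (\<integral>x. g x ^ i * w x \<partial>M)" for i
    by (simp add: f_def)
  have f_sums: "(\<lambda>i. f i x) sums (exp (t * g x) * w x)" for x
    using exp_sums[of "t * g x" x] by (simp add: f_def power_mult_distrib mult.assoc)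
  have norm_f_sums: "(\<lambda>i. norm (f i x)) sums (exp (\<bar>t\<bar> * \<bar>g x\<bar>) * w x)" for x
    using exp_sums[of "\<bar>t\<bar> * \<bar>g x\<bar>" x] nonneg[of x]
    by (simp add: f_def abs_mult power_abs power_mult_distrib mult.assoc)
  have partial_le: "(\<Sum>i\<le>n. norm (f i x)) \<le> exp (\<bar>t\<bar> * \<bar>g x\<bar>) * w x" for n x
    using sum_le_suminf[OF sums_summable[OF norm_f_sums[of x]], of "{..n}"] sums_unique[OF norm_f_sums[of x]]
    by simp
  have summable_integral_norm: "summable (\<lambda>i. \<integral>x. norm (f i x) \<partial>M)"
  proof (rule bounded_imp_summable)
    fix n
    have "(\<Sum>i\<le>n. \<integral>x. norm (f i x) \<partial>M) = (\<integral>x. (\<Sum>i\<le>n. norm (f i x)) \<partial>M)"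
      using f_int by (simp add: Bochner_Integration.integral_sum)
    also have "\<dots> \<le> (\<integral>x. exp (\<bar>t\<bar> * \<bar>g x\<bar>) * w x \<partial>M)"
      using f_int dominated partial_le by (intro integral_mono) auto
    finally show "(\<Sum>i\<le>n. \<integral>x. norm (f i x) \<partial>M) \<le> (\<integral>x. exp (\<bar>t\<bar> * \<bar>g x\<bar>) * w x \<partial>M)" .
  qed simp
  then show "(\<lambda>i. t ^ i / fact i * (\<integral>x. g x ^ i * w x \<partial>M)) sums (\<integral>x. exp (t * g x) * w x \<partial>M)"
    using sums_integral[OF f_int] f_sums norm_f_sums by (simp add: sums_iff integral_f)
  show "summable (\<lambda>i. \<bar>t ^ i / fact i * (\<integral>x. g x ^ i * w x \<partial>M)\<bar>)"
    by (rule summable_comparison_test'[OF summable_integral_norm])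
       (use integral_norm_bound[of M "f n" for n] in \<open>simp add: integral_f\<close>)
qed

lemma exp_neg_sextic_plus_quartic_le:
  fixes b x :: real
  shows "exp (- (x ^ 6) + b * x ^ 4) \<le> exp (4 * \<bar>b\<bar> ^ 3) * exp (- (x ^ 6) / 2)"
proof -
  define w where "w = x ^ 2"
  have "w \<ge> 0"
    by (simp add: w_def)
  then have "0 \<le> (w - 2 * \<bar>b\<bar>) ^ 2 * (w / 2 + \<bar>b\<bar>) + 2 * \<bar>b\<bar> ^ 2 * w"
    by (intro add_nonneg_nonneg mult_nonneg_nonneg) auto
  also have "\<dots> = w ^ 3 / 2 + 4 * \<bar>b\<bar> ^ 3 - \<bar>b\<bar> * w ^ 2"
    by (simp add: power2_eq_square power3_eq_cube algebra_simps)
  finally have "\<bar>b\<bar> * w ^ 2 \<le> w ^ 3 / 2 + 4 * \<bar>b\<bar> ^ 3"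
    by simp
  moreover have "b * w ^ 2 \<le> \<bar>b\<bar> * w ^ 2"
    using \<open>w \<ge> 0\<close> by (intro mult_right_mono) auto
  ultimately have "- (x ^ 6) + b * x ^ 4 \<le> 4 * \<bar>b\<bar> ^ 3 + - (x ^ 6) / 2"
    by (simp add: w_def flip: power_mult)
  then show ?thesis
    by (simp only: exp_add [symmetric] exp_le_cancel_iff)
qed

lemma integrable_exp_neg_sextic_plus_quartic:
  fixes b :: real
  shows "integrable lborel (\<lambda>x::real. exp (- (x ^ 6) + b * x ^ 4))"
proof -
  have "integrable lborel (\<lambda>x::real. exp (- (x ^ 6)))"
    using has_bochner_integral_power_mult_exp_neg_power[of 0 6] by (simp add: has_bochner_integral_iff)
  then have "integrable lborel (\<lambda>x. exp (- ((0 + root 6 (1/2) * x) ^ 6)))"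
    by (rule lborel_integrable_real_affine) simp
  then have "integrable lborel (\<lambda>x::real. exp (4 * \<bar>b\<bar> ^ 3) * exp (- (x ^ 6) / 2))"
    by (simp add: power_mult_distrib real_root_pow_pos)
  then show ?thesis
  proof (rule Bochner_Integration.integrable_bound)
    show "(\<lambda>x::real. exp (- (x ^ 6) + b * x ^ 4)) \<in> borel_measurable lborel"
      by measurable
    show "AE x in lborel. norm (exp (- (x ^ 6) + b * x ^ 4)) \<le> norm (exp (4 * \<bar>b\<bar> ^ 3) * exp (- ((x::real) ^ 6) / 2))"
      by (rule AE_I2) (simp only: real_norm_def abs_exp_cancel abs_mult exp_neg_sextic_plus_quartic_le)
  qed
qed

lemma
  fixes t :: real
  shows sums_integral_exp_neg_sextic_plus_quartic:
      "(\<lambda>i. t ^ i / fact i * (Gamma ((4 * real i + 1) / 6) / 3)) sums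
         (\<integral>x. exp (- (x ^ 6) + t * x ^ 4) \<partial>lborel)"
    and summable_abs_sextic_moment_series:
      "summable (\<lambda>i. \<bar>t ^ i / fact i * (Gamma ((4 * real i + 1) / 6) / 3)\<bar>)"
proof -
  have "has_bochner_integral lborel (\<lambda>x::real. (x ^ 4) ^ i * exp (- (x ^ 6))) (Gamma ((4 * real i + 1) / 6) / 3)" for i
    using has_bochner_integral_power_mult_exp_neg_power[of "4 * i" 6] by (simp add: power_mult add.commute)
  then have moment_integrable: "integrable lborel (\<lambda>x::real. (x ^ 4) ^ i * exp (- (x ^ 6)))"
    and moment: "(\<integral>x. (x ^ 4) ^ i * exp (- (x ^ 6)) \<partial>lborel) = Gamma ((4 * real i + 1) / 6) / 3" for i
    by (simp_all add: has_bochner_integral_iff)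
  have integrand: "exp (c * x ^ 4) * exp (- (x ^ 6)) = exp (- (x ^ 6) + c * x ^ 4)" for c x :: real
    by (simp add: exp_add [symmetric])
  have "integrable lborel (\<lambda>x::real. exp (\<bar>t\<bar> * \<bar>x ^ 4\<bar>) * exp (- (x ^ 6)))"
    using integrable_exp_neg_sextic_plus_quartic[of "\<bar>t\<bar>"] by (simp add: integrand)
  note series = sums_integral_exp_mult_moments[OF _ moment_integrable this]
    summable_abs_integral_moments[OF _ moment_integrable this]
  show "(\<lambda>i. t ^ i / fact i * (Gamma ((4 * real i + 1) / 6) / 3)) sums (\<integral>x. exp (- (x ^ 6) + t * x ^ 4) \<partial>lborel)"
    "summable (\<lambda>i. \<bar>t ^ i / fact i * (Gamma ((4 * real i + 1) / 6) / 3)\<bar>)"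
    using series by (simp_all only: moment integrand exp_ge_zero)
qed

lemma sextic_moment_residue_term:
  fixes t :: real and n r :: nat
  shows "t ^ (3 * n + r) / fact (3 * n + r) * (Gamma ((4 * real (3 * n + r) + 1) / 6) / 3) =
    t ^ r / fact r * (Gamma ((4 * real r + 1) / 6) / 3) *
    (pochhammer ((4 * real r + 1) / 12) n * pochhammer ((4 * real r + 7) / 12) n /
     (pochhammer ((real r + 1) / 3) n * pochhammer ((real r + 2) / 3) n * pochhammer ((real r + 3) / 3) n) *
     (4 * t ^ 3 / 27) ^ n)"
proof -
  have "(4 * real r + 1) / 6 \<notin> \<int>\<^sub>\<le>\<^sub>0"
    by (auto dest: nonpos_Ints_nonpos)
  then have Gamma_eq: "Gamma ((4 * real (3 * n + r) + 1) / 6) =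
      Gamma ((4 * real r + 1) / 6) * 4 ^ n * pochhammer ((4 * real r + 1) / 12) n *
        pochhammer ((4 * real r + 7) / 12) n"
    using Gamma_add_even[of "(4 * real r + 1) / 6" n] by (simp add: add_divide_distrib algebra_simps)
  have power_eq: "t ^ (3 * n + r) = t ^ r * (t ^ 3) ^ n"
    by (simp add: power_add power_mult)
  have "0 < pochhammer ((real r + 1) / 3) n" "0 < pochhammer ((real r + 2) / 3) n"
    "0 < pochhammer ((real r + 3) / 3) n"
    by (auto intro: pochhammer_pos)
  then show ?thesis
    unfolding fact_add_triple Gamma_eq power_eq by (simp add: power_mult_distrib field_simps)
qed

lemma suminf_sextic_moment_series_residue:
  fixes t :: real and r :: nat
  shows "(\<Sum>n. t ^ (3 * n + r) / fact (3 * n + r) * (Gamma ((4 * real (3 * n + r) + 1) / 6) / 3)) =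
    t ^ r / fact r * (Gamma ((4 * real r + 1) / 6) / 3) *
    (\<Sum>n. pochhammer ((4 * real r + 1) / 12) n * pochhammer ((4 * real r + 7) / 12) n /
      (pochhammer ((real r + 1) / 3) n * pochhammer ((real r + 2) / 3) n * pochhammer ((real r + 3) / 3) n) *
      (4 * t ^ 3 / 27) ^ n)"
proof -
  have "inj (\<lambda>n. 3 * n + r)"
    by (auto intro: inj_onI)
  with summable_abs_sextic_moment_series[of t, folded real_norm_def]
  have "summable (\<lambda>n. t ^ (3 * n + r) / fact (3 * n + r) * (Gamma ((4 * real (3 * n + r) + 1) / 6) / 3))"
    by (rule summable_comp_inj)
  then show ?thesis
    unfolding sextic_moment_residue_term by (rule suminf_mult_of_summable)
qed

theorem lemma6p3:
  fixes t :: real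
  shows "integrable lborel (\<lambda>(x::real). exp (- (x ^ 6) + t * x ^ 4)) \<and>
    (\<integral>x. exp (- (x ^ 6) + t * x ^ 4) \<partial>lborel) =
      1/3 * Gamma (1/6) * hyp2F2 (1/12) (7/12) (1/3) (2/3) (4 * t ^ 3 / 27)
    + 1/3 * t * Gamma (5/6) * hyp2F2 (5/12) (11/12) (2/3) (4/3) (4 * t ^ 3 / 27)
    + t ^ 2 * sqrt pi / 12 * hyp2F2 (3/4) (5/4) (4/3) (5/3) (4 * t ^ 3 / 27)"
proof -
  define a where "a i = t ^ i / fact i * (Gamma ((4 * real i + 1) / 6) / 3)" for i
  have "a sums (\<integral>x. exp (- (x ^ 6) + t * x ^ 4) \<partial>lborel)"
    unfolding a_def by (rule sums_integral_exp_neg_sextic_plus_quartic)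
  moreover have "summable (\<lambda>i. norm (a i))"
    using summable_abs_sextic_moment_series[of t] by (simp add: a_def)
  ultimately have split: "(\<integral>x. exp (- (x ^ 6) + t * x ^ 4) \<partial>lborel) = (\<Sum>r<3. \<Sum>n. a (3 * n + r))"
    using suminf_split_residues[of a 3] by (simp add: sums_iff)
  have sum_lessThan_3: "(\<Sum>r<3. f r) = f 0 + f 1 + f 2" for f :: "nat \<Rightarrow> real"
    by (simp add: numeral_3_eq_3 numeral_2_eq_2)
  have "(\<Sum>n. a (3 * n)) = 1/3 * Gamma (1/6) * hyp2F2 (1/12) (7/12) (1/3) (2/3) (4 * t ^ 3 / 27)"
    using suminf_sextic_moment_series_residue[of t 0] by (simp add: a_def hyp2F2_eq_suminf_pochhammer)
  moreover have "(\<Sum>n. a (3 * n + 1)) = 1/3 * t * Gamma (5/6) * hyp2F2 (5/12) (11/12) (2/3) (4/3) (4 * t ^ 3 / 27)"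
    using suminf_sextic_moment_series_residue[of t 1] by (simp add: a_def hyp2F2_eq_suminf_pochhammer mult_ac)
  moreover have "(\<Sum>n. a (3 * n + 2)) = t ^ 2 * sqrt pi / 12 * hyp2F2 (3/4) (5/4) (4/3) (5/3) (4 * t ^ 3 / 27)"
    using suminf_sextic_moment_series_residue[of t 2]
    by (simp add: a_def hyp2F2_eq_suminf_pochhammer Gamma_three_halves mult_ac)
  ultimately show ?thesis
    using integrable_exp_neg_sextic_plus_quartic[of t]
    by (simp only: split sum_lessThan_3 add_0_right simp_thms)
qed

end
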